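(* Let $\Sigma$ be a set and let $1\le p<\infty$. Suppose $s$ is a sane scoring function on $\Sigma$ such that the distance $d$ on $\Sigma$ defined by $d(a,b)=(s(a,a)-s(a,b))^{1/p}$ is a quasi-metric on $\Sigma$, and suppose $\gamma,\delta\in\Gamma_{\mathrm{CL}}(\Sigma)$ satisfy, for all $a,b\in\Sigma$, \[\gamma(b)-\gamma(a)\le d^p(a,b)\quad\text{and}\quad s(a,a)+\delta(a)-s(b,b)-\delta(b)\le d^p(a,b).\] Let $S$ be the global similarity with respect to $s$, $\gamma$ and $\delta$, and let $\alpha(x)=\gamma(x)^{1/p}$ and $\beta(x)=(S(x,x)+\delta(x))^{1/p}$ for all $x\in\Sigma^+$. Then the $\ell^p$ edit distance $D$ on $\Sigma^*$ extending $d$, $\alpha$ and $\beta$ is a quasi-metric on $\Sigma^*$, and for all $x,y\in\Sigma^*$, \[D(x,y)=\big(S(x,x)-S(x,y)\big)^{1/p}.\]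
   Context: $\Sigma^*$ is the free monoid on $\Sigma$ (finite words, concatenation, empty word $e$), $\Sigma^+=\Sigma^*\setminus\{e\}$; for $w=w_1\cdots w_n$, $|w|=n$, $\bar w_k=w_1\cdots w_k$, $\bar w_0=e$. A quasi-metric on $X$ is a map $q:X\times X\to\mathbb{R}_{\ge0}$ with $q(x,y)=q(y,x)=0\iff x=y$ and $q(x,z)\le q(x,y)+q(y,z)$. A sane scoring function $s:X\times X\to\mathbb{R}$ satisfies $s(x,x)>0$, $s(x,x)\ge s(x,y)$, $s(x,x)\ge s(y,x)$ for all $x,y$. A gap penalty over $\Sigma^+$ is a positive function $\gamma:\Sigma^+\to\mathbb{R}$ with $\gamma(u)+\gamma(v)\ge\gamma(uv)$; $\Gamma(\Sigma)$ is the set of these. $\gamma$ is increasing if $\gamma(uxv)\ge\gamma(uv)$ for all $u,v,x\in\Sigma^*$. $\Gamma_{\mathrm{CL}}(\Sigma)$ (composition-length gap penalties) is the set of increasing $\gamma\in\Gamma(\Sigma)$ of the form $\gamma(z)=\sum_i\phi(z_i)+\psi(|z|)$ for some $\phi:\Sigma\to\mathbb{R}$, $\psi:\mathbb{N}\to\mathbb{R}$. Global similarity: $S(e,e)=0$, $S(e,\bar y_j)=-\gamma(\bar y_j)$, $S(\bar x_i,e)=-\delta(\bar x_i)$, and for $i,j\ge1$ \[S(\bar x_i,\bar y_j)=\max\Big\{S(\bar x_{i-1},\bar y_{j-1})+s(x_i,y_j),\ \max_{1\le k\le j}\{S(\bar x_i,\bar y_{j-k})-\gamma(y_{j-k+1}\cdots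 y_j)\},\ \max_{1\le k\le i}\{S(\bar x_{i-k},\bar y_j)-\delta(x_{i-k+1}\cdots x_i)\}\Big\},\] $S(x,y)=S(\bar x_{|x|},\bar y_{|y|})$. $\ell^p$ edit distance extending $d$, $\alpha$, $\beta$ (with $\alpha^p,\beta^p\in\Gamma(\Sigma)$): $D(e,e)=0$, $D(e,\bar y_j)=\alpha(\bar y_j)$, $D(\bar x_i,e)=\beta(\bar x_i)$, and for $i,j\ge1$ \[D(\bar x_i,\bar y_j)=\Big(\min\Big\{D^p(\bar x_{i-1},\bar y_{j-1})+d^p(x_i,y_j),\ \min_{1\le k\le j}\{D^p(\bar x_i,\bar y_{j-k})+\alpha^p(y_{j-k+1}\cdots y_j)\},\ \min_{1\le k\le i}\{D^p(\bar x_{i-k},\bar y_j)+\beta^p(x_{i-k+1}\cdots x_i)\}\Big\}\Big)^{1/p},\] $D(x,y)=D(\bar x_{|x|},\bar y_{|y|})$. *)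

theory Defs
  imports Main "HOL.Real" "HOL.Transcendental"
begin

text \<open>Words over the alphabet (the type 'a) are lists; the empty word e is [].
  Sigma^+ corresponds to nonempty lists.\<close>

definition quasi_metric :: "('b \<Rightarrow> 'b \<Rightarrow> real) \<Rightarrow> bool" where
  "quasi_metric q \<longleftrightarrow>
     (\<forall>x y. q x y \<ge> 0) \<and>
     (\<forall>x y. (q x y = 0 \<and> q y x = 0) \<longleftrightarrow> x = y) \<and>
     (\<forall>x y z. q x z \<le> q x y + q y z)"

definition sane_scoring :: "('a \<Rightarrow> 'a \<Rightarrow> real) \<Rightarrow> bool" where
  "sane_scoring s \<longleftrightarrow> (\<forall>x y. s x x > 0 \<and> s x x \<ge> s x y \<and> s x x \<ge> s y x)"

text \<open>Gap penalty over Sigma^+ (only the values on nonempty words matter).\<close>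
definition gap_penalty :: "('a list \<Rightarrow> real) \<Rightarrow> bool" where
  "gap_penalty g \<longleftrightarrow>
     (\<forall>u. u \<noteq> [] \<longrightarrow> g u > 0) \<and>
     (\<forall>u v. u \<noteq> [] \<longrightarrow> v \<noteq> [] \<longrightarrow> g u + g v \<ge> g (u @ v))"

definition increasing_gap :: "('a list \<Rightarrow> real) \<Rightarrow> bool" where
  "increasing_gap g \<longleftrightarrow> (\<forall>u v x. u @ v \<noteq> [] \<longrightarrow> g (u @ x @ v) \<ge> g (u @ v))"

definition gap_CL :: "('a list \<Rightarrow> real) \<Rightarrow> bool" where
  "gap_CL g \<longleftrightarrow> gap_penalty g \<and> increasing_gap g \<and>
     (\<exists>(\<phi>::'a \<Rightarrow> real) (\<psi>::nat \<Rightarrow> real).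
        \<forall>z. z \<noteq> [] \<longrightarrow> g z = sum_list (map \<phi> z) + \<psi> (length z))"

function glob_sim :: "('a \<Rightarrow> 'a \<Rightarrow> real) \<Rightarrow> ('a list \<Rightarrow> real) \<Rightarrow> ('a list \<Rightarrow> real)
    \<Rightarrow> 'a list \<Rightarrow> 'a list \<Rightarrow> real" where
  "glob_sim s g dl xs ys =
    (if xs = [] \<and> ys = [] then 0
     else if xs = [] then - g ys
     else if ys = [] then - dl xs
     else Max ({glob_sim s g dl (butlast xs) (butlast ys) + s (last xs) (last ys)}
       \<union> (\<lambda>k. glob_sim s g dl xs (take (length ys - k) ys) - g (drop (length ys - k) ys))
            ` {1..length ys}
       \<union> (\<lambda>k. glob_sim s g dl (take (length xs - k) xs) ys - dl (drop (length xs - k) xs))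
            ` {1..length xs}))"
  by pat_completeness auto
termination
  apply (relation "measure (\<lambda>(s, g, dl, xs, ys). length xs + length ys)")
  apply simp
  apply (auto simp: min_def intro!: add_less_mono)
  done

function lp_edit :: "real \<Rightarrow> ('a \<Rightarrow> 'a \<Rightarrow> real) \<Rightarrow> ('a list \<Rightarrow> real) \<Rightarrow> ('a list \<Rightarrow> real)
    \<Rightarrow> 'a list \<Rightarrow> 'a list \<Rightarrow> real" where
  "lp_edit p d al be xs ys =
    (if xs = [] \<and> ys = [] then 0
     else if xs = [] then al ys
     else if ys = [] then be xs
     else (Min ({lp_edit p d al be (butlast xs) (butlast ys) powr p + d (last xs) (last ys) powr p}
       \<union> (\<lambda>k. lp_edit p d al be xs (take (length ys - k) ys) powr p
               + al (drop (length ys - k) ys) powr p) ` {1..length ys}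
       \<union> (\<lambda>k. lp_edit p d al be (take (length xs - k) xs) ys powr p
               + be (drop (length xs - k) xs) powr p) ` {1..length xs})) powr (1 / p))"
  by pat_completeness auto
termination
  apply (relation "measure (\<lambda>(p, d, al, be, xs, ys). length xs + length ys)")
  apply simp
  apply (auto simp: min_def intro!: add_less_mono)
  done

definition score_dist :: "real \<Rightarrow> ('a \<Rightarrow> 'a \<Rightarrow> real) \<Rightarrow> 'a \<Rightarrow> 'a \<Rightarrow> real" where
  "score_dist p s a b = (s a a - s a b) powr (1 / p)"

end

theory Submission
  imports Defs "HOL-Analysis.Convex"
begin

text \<open>
  The identity \<open>D(x, y)\<^sup>p = S(x, x) - S(x, y)\<close> holds because \<open>D\<^sup>p\<close> and \<open>S\<close> obey the same recursion
  over the last column of an alignment. Since \<open>S(x, x)\<close> is the sum of the \<open>s(a, a)\<close> over the letters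
  of \<open>x\<close> and \<open>d\<^sup>p(a, b) = s(a, a) - s(a, b)\<close>, every candidate value of \<open>D\<^sup>p(x, y)\<close> is the
  corresponding candidate of \<open>S(x, y)\<close> reflected at \<open>S(x, x)\<close>, so the minimum of the one is the
  reflected maximum of the other.

  For the quasi-metric property, \<open>\<alpha>\<^sup>p = \<gamma>\<close> and \<open>\<beta>\<^sup>p = \<Sum>\<^sub>a s(a, a) + \<delta>\<close> are composition-length gap
  penalties which change by at most \<open>d\<^sup>p(a, b)\<close> when a letter \<open>a\<close> is replaced by \<open>b\<close>. For any
  \<open>\<ell>\<^sup>p\<close> edit distance with such gap costs, \<open>D(x, z) \<le> D(x, y) + D(y, z)\<close> follows by induction on
  \<open>|x| + |y| + |z|\<close>, looking at the last column of optimal alignments of \<open>(x, y)\<close> and of \<open>(y, z)\<close>.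
  In each case \<open>D(x, z)\<^sup>p \<le> (A + B)\<^sup>p + (a + b)\<^sup>p\<close> with \<open>A\<^sup>p + a\<^sup>p \<le> D(x, y)\<^sup>p\<close> and
  \<open>B\<^sup>p + b\<^sup>p \<le> D(y, z)\<^sup>p\<close>, and Minkowski's inequality in the plane concludes. When the alignment of
  \<open>(x, y)\<close> ends with a gap opposite a suffix \<open>u\<close> of \<open>y\<close>, the alignment of \<open>(y, z)\<close> is cut where \<open>u\<close>
  begins, and the gap cost of \<open>u\<close> is compared with that of the matching part of \<open>z\<close> using the
  rotation invariance and letterwise Lipschitz property of \<open>\<alpha>\<^sup>p\<close>.
\<close>

section \<open>Minkowski's inequality in the plane\<close>

lemma powr_convex_nonneg:
  assumes "1 \<le> p"
  shows "convex_on {0::real..} (\<lambda>x. x powr p)"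
proof (rule convex_on_linorderI)
  fix t x y :: real
  assume t: "0 < t" "t < 1" and xy: "x \<in> {0..}" "y \<in> {0..}" "x < y"
  show "((1 - t) *\<^sub>R x + t *\<^sub>R y) powr p \<le> (1 - t) * x powr p + t * y powr p"
  proof (cases "x = 0")
    case True
    have "t powr p \<le> t powr 1"
      using t assms by (intro powr_mono') auto
    then show ?thesis
      using True t xy by (simp add: powr_mult mult_right_mono)
  next
    case False
    with xy have "x \<in> {0<..}" "y \<in> {0<..}" by auto
    with convex_onD[OF powr_convex[OF assms]] t show ?thesis by simp
  qed
qed (rule convex_real_interval)

lemma powr_add_le_convex:
  fixes p M N X Y :: real
  assumes p: "1 \<le> p" and pos: "0 < M" "0 < N" and nonneg: "0 \<le> X" "0 \<le> Y"
  shows "(X + Y) powr p \<le> (M + N) powr p * (M / (M + N) * (X / M) powr p + N / (M + N) * (Y / N) powr p)"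
proof -
  define t where "t = N / (M + N)"
  have t: "0 \<le> t" "t \<le> 1" "1 - t = M / (M + N)"
    using pos by (auto simp: t_def field_simps)
  have "(1 - t) * (X / M) + t * (Y / N) = (X + Y) / (M + N)"
    using pos unfolding t(3) by (simp add: t_def add_divide_distrib)
  then have "(X + Y) powr p = (M + N) powr p * ((1 - t) * (X / M) + t * (Y / N)) powr p"
    using pos nonneg by (simp add: powr_divide)
  also have "\<dots> \<le> (M + N) powr p * ((1 - t) * (X / M) powr p + t * (Y / N) powr p)"
    using convex_onD[OF powr_convex_nonneg[OF p] t(1,2), of "X / M" "Y / N"] pos nonneg
    by (intro mult_left_mono) auto
  finally show ?thesis
    unfolding t(3) by (simp add: t_def)
qed

lemma minkowski_pair:
  fixes p A B a b :: real
  assumes p: "1 \<le> p" and nonneg: "0 \<le> A" "0 \<le> B" "0 \<le> a" "0 \<le> b"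
  shows "((A + B) powr p + (a + b) powr p) powr (1 / p)
      \<le> (A powr p + a powr p) powr (1 / p) + (B powr p + b powr p) powr (1 / p)"
proof -
  define M N where "M = (A powr p + a powr p) powr (1 / p)" and "N = (B powr p + b powr p) powr (1 / p)"
  have "0 < p" using p by simp
  then have M_pow: "M powr p = A powr p + a powr p" and N_pow: "N powr p = B powr p + b powr p"
    by (simp_all add: M_def N_def powr_powr)
  consider "M = 0" | "N = 0" | "0 < M" "0 < N"
    unfolding M_def N_def by fastforce
  then show ?thesis
  proof cases
    case 1
    with M_pow \<open>0 < p\<close> nonneg have "A = 0" "a = 0" by (simp_all add: add_nonneg_eq_0_iff)
    then show ?thesis by (simp add: N_def)
  next
    case 2
    with N_pow \<open>0 < p\<close> nonneg have "B = 0" "b = 0" by (simp_all add: add_nonneg_eq_0_iff)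
    then show ?thesis by (simp add: M_def)
  next
    case 3
    have unit_M: "(A / M) powr p + (a / M) powr p = 1" and unit_N: "(B / N) powr p + (b / N) powr p = 1"
      using 3 nonneg by (simp_all add: powr_divide add_divide_distrib[symmetric] M_pow[symmetric] N_pow[symmetric])
    have "(A + B) powr p + (a + b) powr p
        \<le> (M + N) powr p * (M / (M + N) * ((A / M) powr p + (a / M) powr p)
                            + N / (M + N) * ((B / N) powr p + (b / N) powr p))"
      using add_mono[OF powr_add_le_convex[OF p 3 nonneg(1,2)] powr_add_le_convex[OF p 3 nonneg(3,4)]]
      by (simp add: algebra_simps)
    also have "\<dots> = (M + N) powr p"
      using 3 by (simp add: unit_M unit_N add_divide_distrib[symmetric])
    finally have "((A + B) powr p + (a + b) powr p) powr (1 / p) \<le> ((M + N) powr p) powr (1 / p)"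
      by (intro powr_mono2) (use \<open>0 < p\<close> in auto)
    also have "\<dots> = M + N"
      using \<open>0 < p\<close> 3 by (simp add: powr_powr)
    finally show ?thesis unfolding M_def N_def .
  qed
qed

section \<open>Composition-length gap penalties\<close>

definition gap_cost :: "('a list \<Rightarrow> real) \<Rightarrow> 'a list \<Rightarrow> real" where
  "gap_cost g w = (if w = [] then 0 else g w)"

lemma gap_CL_pos: "gap_CL g \<Longrightarrow> w \<noteq> [] \<Longrightarrow> 0 < g w"
  by (simp add: gap_CL_def gap_penalty_def)

lemma gap_CL_nonneg: "gap_CL g \<Longrightarrow> w \<noteq> [] \<Longrightarrow> 0 \<le> g w"
  by (simp add: gap_CL_pos less_imp_le)

lemma gap_CL_cong: "(\<And>w. w \<noteq> [] \<Longrightarrow> f w = g w) \<Longrightarrow> gap_CL f \<longleftrightarrow> gap_CL g"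
  unfolding gap_CL_def gap_penalty_def increasing_gap_def by auto

lemma gap_CL_add_letter_weights:
  assumes g: "gap_CL g" and c: "\<And>a. 0 \<le> c a"
  shows "gap_CL (\<lambda>w. (\<Sum>a\<leftarrow>w. c a) + g w)"
proof -
  obtain \<phi> \<psi> where g_eq: "\<And>z. z \<noteq> [] \<Longrightarrow> g z = (\<Sum>a\<leftarrow>z. \<phi> a) + \<psi> (length z)"
    using g unfolding gap_CL_def by blast
  have weights_nonneg: "0 \<le> (\<Sum>a\<leftarrow>w. c a)" for w
    using c by (intro sum_list_nonneg) auto
  have "gap_penalty (\<lambda>w. (\<Sum>a\<leftarrow>w. c a) + g w)"
    using g weights_nonneg unfolding gap_CL_def gap_penalty_def
    by (auto intro: add_nonneg_pos)
  moreover have "increasing_gap (\<lambda>w. (\<Sum>a\<leftarrow>w. c a) + g w)"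
    unfolding increasing_gap_def
  proof (intro allI impI)
    fix u v x :: "'a list"
    assume "u @ v \<noteq> []"
    then have "g (u @ v) \<le> g (u @ x @ v)"
      using g by (simp add: gap_CL_def increasing_gap_def)
    then show "(\<Sum>a\<leftarrow>u @ v. c a) + g (u @ v) \<le> (\<Sum>a\<leftarrow>u @ x @ v. c a) + g (u @ x @ v)"
      using weights_nonneg[of x] by simp
  qed
  moreover have "(\<Sum>a\<leftarrow>w. c a) + g w = (\<Sum>a\<leftarrow>w. c a + \<phi> a) + \<psi> (length w)" if "w \<noteq> []" for w
    using g_eq[OF that] by (simp add: sum_list_addf)
  ultimately show ?thesis
    unfolding gap_CL_def by blast
qed

lemma gap_cost_nonneg: "gap_CL g \<Longrightarrow> 0 \<le> gap_cost g w"
  by (simp add: gap_cost_def gap_CL_nonneg)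

lemma gap_cost_append_le: "gap_CL g \<Longrightarrow> gap_cost g (x @ y) \<le> gap_cost g x + gap_cost g y"
  by (auto simp: gap_cost_def gap_CL_def gap_penalty_def)

lemma gap_cost_mono:
  assumes "gap_CL g"
  shows "gap_cost g (u @ v) \<le> gap_cost g (u @ x @ v)"
proof (cases "u @ v = []")
  case True
  then show ?thesis using gap_cost_nonneg[OF assms, of x] by (simp add: gap_cost_def)
next
  case False
  then show ?thesis using assms by (auto simp: gap_cost_def gap_CL_def increasing_gap_def)
qed

lemma gap_cost_rotate:
  assumes "gap_CL g"
  shows "gap_cost g (x @ y) = gap_cost g (y @ x)"
proof -
  obtain \<phi> \<psi> where "\<And>z. z \<noteq> [] \<Longrightarrow> g z = (\<Sum>a\<leftarrow>z. \<phi> a) + \<psi> (length z)"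
    using assms unfolding gap_CL_def by blast
  then show ?thesis by (simp add: gap_cost_def add.commute)
qed

lemma gap_cost_lipschitz:
  assumes "gap_CL g" and "length r = length t" and "\<And>a b. g [b] - g [a] \<le> e a b"
  shows "gap_cost g t \<le> gap_cost g r + (\<Sum>(a, b)\<leftarrow>zip r t. e a b)"
proof -
  obtain \<phi> \<psi> where g_eq: "\<And>z. z \<noteq> [] \<Longrightarrow> g z = (\<Sum>a\<leftarrow>z. \<phi> a) + \<psi> (length z)"
    using assms(1) unfolding gap_CL_def by blast
  have letter_le: "\<phi> b - \<phi> a \<le> e a b" for a b
    using assms(3)[of b a] by (simp add: g_eq)
  have "(\<Sum>b\<leftarrow>t. \<phi> b) \<le> (\<Sum>a\<leftarrow>r. \<phi> a) + (\<Sum>(a, b)\<leftarrow>zip r t. e a b)"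
    using assms(2)
  proof (induction r t rule: list_induct2)
    case (Cons a r b t)
    then show ?case using letter_le[where a = a and b = b] by simp
  qed simp
  then show ?thesis
    using assms(2) by (cases "r = []") (auto simp: gap_cost_def g_eq)
qed

section \<open>The alignment recursions\<close>

declare lp_edit.simps[simp del] glob_sim.simps[simp del]

text \<open>
  The candidate values in the recursions of \<open>glob_sim\<close> and of \<open>lp_edit\<^sup>p\<close>, one for each
  possible last column of an alignment of \<open>x\<close> with \<open>y\<close>: the last letters are matched (score \<open>m\<close>),
  a nonempty suffix of \<open>y\<close> is set against a gap (cost \<open>g\<close>), or a nonempty suffix of \<open>x\<close> is
  (cost \<open>h\<close>).
\<close>
definition last_step_values ::
  "('a list \<Rightarrow> 'a list \<Rightarrow> real) \<Rightarrow> ('a \<Rightarrow> 'a \<Rightarrow> real) \<Rightarrow> ('a list \<Rightarrow> real) \<Rightarrow> ('a list \<Rightarrow> real)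
    \<Rightarrow> 'a list \<Rightarrow> 'a list \<Rightarrow> real set" where
  "last_step_values F m g h x y =
     (\<lambda>(x', a, y', b). F x' y' + m a b) ` {(x', a, y', b). x = x' @ [a] \<and> y = y' @ [b]}
     \<union> (\<lambda>(y', w). F x y' + g w) ` {(y', w). w \<noteq> [] \<and> y = y' @ w}
     \<union> (\<lambda>(x', w). F x' y + h w) ` {(x', w). w \<noteq> [] \<and> x = x' @ w}"

lemma suffix_split_image:
  "(\<lambda>k. f (take (length y - k) y) (drop (length y - k) y)) ` {1..length y}
    = (\<lambda>(y', w). f y' w) ` {(y', w). w \<noteq> [] \<and> y = y' @ w}"
proof (intro equalityI subsetI)
  fix e assume "e \<in> (\<lambda>k. f (take (length y - k) y) (drop (length y - k) y)) ` {1..length y}"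
  then obtain k where "k \<in> {1..length y}" "e = f (take (length y - k) y) (drop (length y - k) y)"
    by (rule imageE)
  then show "e \<in> (\<lambda>(y', w). f y' w) ` {(y', w). w \<noteq> [] \<and> y = y' @ w}"
    by (intro image_eqI[where x = "(take (length y - k) y, drop (length y - k) y)"]) auto
next
  fix e assume "e \<in> (\<lambda>(y', w). f y' w) ` {(y', w). w \<noteq> [] \<and> y = y' @ w}"
  then obtain y' w where "w \<noteq> []" "y = y' @ w" "e = f y' w" by auto
  then show "e \<in> (\<lambda>k. f (take (length y - k) y) (drop (length y - k) y)) ` {1..length y}"
    by (intro image_eqI[where x = "length w"]) (auto simp: Suc_le_eq)
qed

lemma last_step_values_take_drop:
  assumes "x \<noteq> []" "y \<noteq> []"
  shows "last_step_values F m g h x y =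
     {F (butlast x) (butlast y) + m (last x) (last y)}
     \<union> (\<lambda>k. F x (take (length y - k) y) + g (drop (length y - k) y)) ` {1..length y}
     \<union> (\<lambda>k. F (take (length x - k) x) y + h (drop (length x - k) x)) ` {1..length x}"
proof -
  have "(\<lambda>(x', a, y', b). F x' y' + m a b) ` {(x', a, y', b). x = x' @ [a] \<and> y = y' @ [b]}
      = {F (butlast x) (butlast y) + m (last x) (last y)}"
    using assms by (auto simp: snoc_eq_iff_butlast image_iff) (metis append_butlast_last_id)
  then show ?thesis
    unfolding last_step_values_def suffix_split_image[of "\<lambda>u w. F u y + h w"]
      suffix_split_image[of "\<lambda>u w. F x u + g w"] by simp
qed

lemma finite_last_step_values: "x \<noteq> [] \<Longrightarrow> y \<noteq> [] \<Longrightarrow> finite (last_step_values F m g h x y)"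
  by (simp add: last_step_values_take_drop)

lemma last_step_values_nonempty: "x \<noteq> [] \<Longrightarrow> y \<noteq> [] \<Longrightarrow> last_step_values F m g h x y \<noteq> {}"
  by (simp add: last_step_values_take_drop)

lemma last_step_values_substI: "F x y + m a b \<in> last_step_values F m g h (x @ [a]) (y @ [b])"
  unfolding last_step_values_def by (intro UnI1 image_eqI[where x = "(x, a, y, b)"]) auto

lemma last_step_values_insI: "w \<noteq> [] \<Longrightarrow> F x y + g w \<in> last_step_values F m g h x (y @ w)"
  unfolding last_step_values_def by (intro UnI1 UnI2 image_eqI[where x = "(y, w)"]) auto

lemma last_step_valuesE:
  assumes "e \<in> last_step_values F m g h x y"
  obtains (subst) x' a y' b where "x = x' @ [a]" "y = y' @ [b]" "e = F x' y' + m a b"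
    | (ins) y' w where "w \<noteq> []" "y = y' @ w" "e = F x y' + g w"
    | (del) x' w where "w \<noteq> []" "x = x' @ w" "e = F x' y + h w"
  using assms unfolding last_step_values_def by auto

lemma last_step_values_transpose:
  "last_step_values (\<lambda>u v. F v u) (\<lambda>a b. m b a) h g y x = last_step_values F m g h x y"
  unfolding last_step_values_def by force

lemma last_step_values_cong:
  assumes "\<And>u v. length u + length v < length x + length y \<Longrightarrow> F u v = F' u v"
  shows "last_step_values F m g h x y = last_step_values F' m g h x y"
  unfolding last_step_values_def using assms by (intro arg_cong2[where f = "(\<union>)"] image_cong) auto

lemma last_step_values_affine:
  fixes W :: "'a list \<Rightarrow> real"
  assumes F: "\<And>u v. length u + length v < length x + length y \<Longrightarrow> F u v = W u - S u v"
    and W: "\<And>u v. W (u @ v) = W u + W v"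
    and m: "\<And>a b. m a b = W [a] - m' a b"
    and g: "\<And>w. w \<noteq> [] \<Longrightarrow> g w = - g' w"
    and h: "\<And>w. w \<noteq> [] \<Longrightarrow> h w = W w - h' w"
  shows "last_step_values F m g h x y = (\<lambda>e. W x - e) ` last_step_values S m' g' h' x y"
  unfolding last_step_values_def image_Un image_image using assms
  by (intro arg_cong2[where f = "(\<union>)"] image_cong) auto

definition lp_edit_pow :: "real \<Rightarrow> ('a \<Rightarrow> 'a \<Rightarrow> real) \<Rightarrow> ('a list \<Rightarrow> real) \<Rightarrow> ('a list \<Rightarrow> real)
    \<Rightarrow> 'a list \<Rightarrow> 'a list \<Rightarrow> real" where
  "lp_edit_pow p d al be x y = lp_edit p d al be x y powr p"

lemma lp_edit_Nil_Nil [simp]: "lp_edit p d al be [] [] = 0"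
  by (subst lp_edit.simps) simp

lemma lp_edit_Nil_left: "y \<noteq> [] \<Longrightarrow> lp_edit p d al be [] y = al y"
  by (subst lp_edit.simps) simp

lemma lp_edit_Nil_right: "x \<noteq> [] \<Longrightarrow> lp_edit p d al be x [] = be x"
  by (subst lp_edit.simps) simp

lemma lp_edit_rec:
  "x \<noteq> [] \<Longrightarrow> y \<noteq> [] \<Longrightarrow> lp_edit p d al be x y =
    Min (last_step_values (lp_edit_pow p d al be) (\<lambda>a b. d a b powr p)
      (\<lambda>w. al w powr p) (\<lambda>w. be w powr p) x y) powr (1 / p)"
  by (subst lp_edit.simps) (simp add: last_step_values_take_drop lp_edit_pow_def)

lemma glob_sim_Nil_Nil [simp]: "glob_sim s g dl [] [] = 0"
  by (subst glob_sim.simps) simp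

lemma glob_sim_Nil_left: "y \<noteq> [] \<Longrightarrow> glob_sim s g dl [] y = - g y"
  by (subst glob_sim.simps) simp

lemma glob_sim_Nil_right: "x \<noteq> [] \<Longrightarrow> glob_sim s g dl x [] = - dl x"
  by (subst glob_sim.simps) simp

lemma glob_sim_rec:
  "x \<noteq> [] \<Longrightarrow> y \<noteq> [] \<Longrightarrow>
    glob_sim s g dl x y = Max (last_step_values (glob_sim s g dl) s (\<lambda>w. - g w) (\<lambda>w. - dl w) x y)"
  by (subst glob_sim.simps) (simp add: last_step_values_take_drop)

lemma lp_edit_pow_rec:
  assumes "p \<noteq> 0" "x \<noteq> []" "y \<noteq> []"
  shows "lp_edit_pow p d al be x y =
    Min (last_step_values (lp_edit_pow p d al be) (\<lambda>a b. d a b powr p)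
      (\<lambda>w. al w powr p) (\<lambda>w. be w powr p) x y)"
proof -
  let ?V = "last_step_values (lp_edit_pow p d al be) (\<lambda>a b. d a b powr p) (\<lambda>w. al w powr p) (\<lambda>w. be w powr p) x y"
  have "0 \<le> e" if "e \<in> ?V" for e
    using that by (cases rule: last_step_valuesE) (simp_all add: lp_edit_pow_def)
  then have "0 \<le> Min ?V"
    using assms(2,3) by (simp add: finite_last_step_values last_step_values_nonempty)
  then show ?thesis
    using assms by (simp add: lp_edit_rec lp_edit_pow_def powr_powr)
qed

lemma lp_edit_transpose: "lp_edit p d al be x y = lp_edit p (\<lambda>a b. d b a) be al y x"
proof (induction "length x + length y" arbitrary: x y rule: less_induct)
  case less
  show ?case
  proof (cases "x = [] \<or> y = []")
    case True
    then show ?thesis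
      by (cases "x = []"; cases "y = []") (simp_all add: lp_edit_Nil_left lp_edit_Nil_right)
  next
    case False
    have "lp_edit_pow p d al be u v = lp_edit_pow p (\<lambda>a b. d b a) be al v u"
      if "length u + length v < length x + length y" for u v
      using less[OF that] by (simp add: lp_edit_pow_def)
    then have "last_step_values (lp_edit_pow p d al be) (\<lambda>a b. d a b powr p) (\<lambda>w. al w powr p) (\<lambda>w. be w powr p) x y
      = last_step_values (lp_edit_pow p (\<lambda>a b. d b a) be al) (\<lambda>a b. d b a powr p) (\<lambda>w. be w powr p) (\<lambda>w. al w powr p) y x"
      by (subst last_step_values_transpose[symmetric]) (rule last_step_values_cong)
    then show ?thesis
      using False by (simp add: lp_edit_rec)
  qed
qed

lemma lp_edit_pow_transpose: "lp_edit_pow p d al be x y = lp_edit_pow p (\<lambda>a b. d b a) be al y x"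
  unfolding lp_edit_pow_def by (subst lp_edit_transpose) (rule refl)

section \<open>Global similarity\<close>

lemma sane_scoring_diag_nonneg: "sane_scoring s \<Longrightarrow> 0 \<le> s a a"
  by (simp add: sane_scoring_def less_imp_le)

lemma sane_scoring_self_score_nonneg: "sane_scoring s \<Longrightarrow> 0 \<le> (\<Sum>a\<leftarrow>w. s a a)"
  by (intro sum_list_nonneg) (auto simp: sane_scoring_diag_nonneg)

lemma score_dist_powr:
  assumes "sane_scoring s" "0 < p"
  shows "score_dist p s a b powr p = s a a - s a b"
  using assms by (simp add: sane_scoring_def score_dist_def powr_powr)

lemma glob_sim_le_self_score:
  assumes sane: "sane_scoring s"
    and g: "\<And>w. w \<noteq> [] \<Longrightarrow> 0 \<le> g w" and dl: "\<And>w. w \<noteq> [] \<Longrightarrow> 0 \<le> dl w"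
  shows "glob_sim s g dl x y \<le> (\<Sum>a\<leftarrow>x. s a a)"
proof (induction "length x + length y" arbitrary: x y rule: less_induct)
  case less
  consider "x = []" "y = []" | "x = []" "y \<noteq> []" | "x \<noteq> []" "y = []" | "x \<noteq> []" "y \<noteq> []"
    by blast
  then show ?case
  proof cases
    case 4
    have "e \<le> (\<Sum>a\<leftarrow>x. s a a)"
      if "e \<in> last_step_values (glob_sim s g dl) s (\<lambda>w. - g w) (\<lambda>w. - dl w) x y" for e
      using that
    proof (cases rule: last_step_valuesE)
      case (subst x' a y' b)
      then show ?thesis
        using less[of x' y'] sane by (auto simp: sane_scoring_def intro: add_mono)
    next
      case (ins y' w)
      then show ?thesis using less[of x y'] g[of w] by simp
    next
      case (del x' w)
      then show ?thesis
        using less[of x' y] dl[of w] sane_scoring_self_score_nonneg[OF sane, of w] by simp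
    qed
    then show ?thesis
      using 4 by (simp add: glob_sim_rec finite_last_step_values last_step_values_nonempty)
  next
    case 2
    then show ?thesis using g[of y] by (simp add: glob_sim_Nil_left)
  next
    case 3
    then show ?thesis
      using dl[of x] sane_scoring_self_score_nonneg[OF sane, of x] by (simp add: glob_sim_Nil_right)
  qed simp
qed

lemma glob_sim_diag:
  assumes "sane_scoring s"
    and "\<And>w. w \<noteq> [] \<Longrightarrow> 0 \<le> g w" and "\<And>w. w \<noteq> [] \<Longrightarrow> 0 \<le> dl w"
  shows "glob_sim s g dl x x = (\<Sum>a\<leftarrow>x. s a a)"
proof (rule antisym[OF glob_sim_le_self_score[OF assms]])
  show "(\<Sum>a\<leftarrow>x. s a a) \<le> glob_sim s g dl x x"
  proof (induction x rule: rev_induct)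
    case (snoc a x)
    have "glob_sim s g dl x x + s a a \<le> glob_sim s g dl (x @ [a]) (x @ [a])"
      by (simp add: glob_sim_rec finite_last_step_values last_step_values_substI)
    with snoc show ?case by simp
  qed simp
qed

lemma lp_edit_eq_glob_sim:
  fixes s :: "'a \<Rightarrow> 'a \<Rightarrow> real"
  assumes p: "0 < p" and sane: "sane_scoring s"
    and g: "\<And>w. w \<noteq> [] \<Longrightarrow> 0 \<le> g w" and dl: "\<And>w. w \<noteq> [] \<Longrightarrow> 0 \<le> dl w"
  shows "lp_edit p (score_dist p s) (\<lambda>x. g x powr (1 / p)) (\<lambda>x. (glob_sim s g dl x x + dl x) powr (1 / p)) x y
    = (glob_sim s g dl x x - glob_sim s g dl x y) powr (1 / p)"
proof (induction "length x + length y" arbitrary: x y rule: less_induct)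
  case less
  let ?al = "\<lambda>x. g x powr (1 / p)" and ?be = "\<lambda>x. (glob_sim s g dl x x + dl x) powr (1 / p)"
  let ?S = "glob_sim s g dl" and ?W = "\<lambda>w. \<Sum>a\<leftarrow>w. s a a"
  have diag: "?S w w = ?W w" for w
    by (rule glob_sim_diag[OF sane g dl])
  consider "x = []" "y = []" | "x = []" "y \<noteq> []" | "x \<noteq> []" "y = []" | "x \<noteq> []" "y \<noteq> []"
    by blast
  then show ?case
  proof cases
    case 4
    have IH: "lp_edit_pow p (score_dist p s) ?al ?be u v = ?W u - ?S u v"
      if "length u + length v < length x + length y" for u v
      using less[OF that] glob_sim_le_self_score[OF sane g dl, where x = u and y = v] p
      by (simp add: lp_edit_pow_def powr_powr diag)
    let ?V = "last_step_values ?S s (\<lambda>w. - g w) (\<lambda>w. - dl w) x y"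
    have "last_step_values (lp_edit_pow p (score_dist p s) ?al ?be) (\<lambda>a b. score_dist p s a b powr p)
        (\<lambda>w. ?al w powr p) (\<lambda>w. ?be w powr p) x y = (\<lambda>e. ?W x - e) ` ?V"
      using p g dl sane_scoring_self_score_nonneg[OF sane]
      by (intro last_step_values_affine[OF IH]) (simp_all add: score_dist_powr[OF sane p] powr_powr diag)
    moreover have "Min ((\<lambda>e. ?W x - e) ` ?V) = ?W x - Max ?V"
      using 4 by (intro Min_eqI) (auto simp: finite_last_step_values last_step_values_nonempty)
    ultimately show ?thesis
      using 4 by (simp add: lp_edit_rec glob_sim_rec diag)
  qed (simp_all add: lp_edit_Nil_left lp_edit_Nil_right glob_sim_Nil_left glob_sim_Nil_right)
qed

section \<open>Quasi-metric \<open>\<ell>\<^sup>p\<close> edit distances\<close>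

lemma quasi_metric_converse: "quasi_metric d \<Longrightarrow> quasi_metric (\<lambda>a b. d b a)"
  unfolding quasi_metric_def by (metis add.commute)

lemma add_powr_root_le:
  fixes a b p :: real
  assumes "1 \<le> p" "0 \<le> a" "0 \<le> b"
  shows "(a + b) powr (1 / p) \<le> a powr (1 / p) + b powr (1 / p)"
  using minkowski_pair[OF assms(1), of "a powr (1 / p)" 0 0 "b powr (1 / p)"] assms
  by (simp add: powr_powr)

text \<open>
  \<open>D\<close> charges \<open>al\<close> for gaps opposite blocks of its second argument and \<open>be\<close> for gaps opposite
  blocks of its first.
\<close>
locale cl_edit_costs =
  fixes p :: real and d :: "'a \<Rightarrow> 'a \<Rightarrow> real" and al be :: "'a list \<Rightarrow> real"
  assumes p_ge_1: "1 \<le> p"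
    and quasi_metric_d: "quasi_metric d"
    and al_nonneg: "0 \<le> al w" and be_nonneg: "0 \<le> be w"
    and gap_CL_al: "gap_CL (\<lambda>w. al w powr p)" and gap_CL_be: "gap_CL (\<lambda>w. be w powr p)"
    and al_lipschitz: "al [b] powr p - al [a] powr p \<le> d a b powr p"
    and be_lipschitz: "be [a] powr p - be [b] powr p \<le> d a b powr p"
begin

abbreviation D where "D \<equiv> lp_edit p d al be"
abbreviation F where "F \<equiv> lp_edit_pow p d al be"
abbreviation ins_cost where "ins_cost \<equiv> gap_cost (\<lambda>w. al w powr p)"
abbreviation del_cost where "del_cost \<equiv> gap_cost (\<lambda>w. be w powr p)"

lemma p_pos: "0 < p"
  using p_ge_1 by simp

lemma d_nonneg: "0 \<le> d a b"
  using quasi_metric_d by (simp add: quasi_metric_def)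

lemma d_triangle: "d a c \<le> d a b + d b c"
  using quasi_metric_d by (simp add: quasi_metric_def)

lemma cl_edit_costs_transpose: "cl_edit_costs p (\<lambda>a b. d b a) be al"
  using p_ge_1 quasi_metric_converse[OF quasi_metric_d] al_nonneg be_nonneg gap_CL_al gap_CL_be
    al_lipschitz be_lipschitz
  by unfold_locales auto

lemma D_nonneg: "0 \<le> D x y"
  by (cases "x = []"; cases "y = []") (simp_all add: al_nonneg be_nonneg lp_edit_Nil_left lp_edit_Nil_right lp_edit_rec)

lemma D_eq_root: "D x y = F x y powr (1 / p)"
  using D_nonneg[of x y] p_pos by (simp add: lp_edit_pow_def powr_powr)

lemma root_powr: "0 \<le> t \<Longrightarrow> (t powr (1 / p)) powr p = t"
  using p_pos by (simp add: powr_powr)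

lemma root_le_imp_le_powr: "0 \<le> t \<Longrightarrow> t powr (1 / p) \<le> c \<Longrightarrow> t \<le> c powr p"
  using powr_mono2[of p "t powr (1 / p)" c] p_pos by (simp add: powr_powr)

lemma F_le_powr:
  assumes "D x y \<le> c"
  shows "F x y \<le> c powr p"
proof (rule root_le_imp_le_powr)
  show "0 \<le> F x y" by (simp add: lp_edit_pow_def)
  show "F x y powr (1 / p) \<le> c" using assms by (simp only: D_eq_root)
qed

lemma F_Nil_left: "F [] y = ins_cost y"
  by (cases "y = []") (simp_all add: lp_edit_pow_def gap_cost_def lp_edit_Nil_left)

lemma F_Nil_right: "F x [] = del_cost x"
  by (cases "x = []") (simp_all add: lp_edit_pow_def gap_cost_def lp_edit_Nil_right)

lemma F_snoc_le: "F (x @ [a]) (y @ [b]) \<le> F x y + d a b powr p"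
proof -
  have "F x y + d a b powr p
      \<in> last_step_values F (\<lambda>a b. d a b powr p) (\<lambda>w. al w powr p) (\<lambda>w. be w powr p) (x @ [a]) (y @ [b])"
    by (rule last_step_values_substI)
  then show ?thesis using p_pos by (simp add: lp_edit_pow_rec finite_last_step_values)
qed

lemma F_ins_le: "F x (y @ w) \<le> F x y + ins_cost w"
proof -
  consider "w = []" | "x = []" | "x \<noteq> []" "w \<noteq> []" by blast
  then show ?thesis
  proof cases
    case 2
    then show ?thesis using gap_cost_append_le[OF gap_CL_al] by (simp add: F_Nil_left)
  next
    case 3
    have "F x y + al w powr p
        \<in> last_step_values F (\<lambda>a b. d a b powr p) (\<lambda>w. al w powr p) (\<lambda>w. be w powr p) x (y @ w)"
      using 3(2) by (rule last_step_values_insI)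
    then show ?thesis using 3 p_pos by (simp add: lp_edit_pow_rec finite_last_step_values gap_cost_def)
  qed (simp add: gap_cost_def)
qed

lemma F_del_le: "F (x @ w) y \<le> F x y + del_cost w"
  using cl_edit_costs.F_ins_le[OF cl_edit_costs_transpose, of y x w]
  by (simp add: lp_edit_pow_transpose[of p d al be])

lemma F_last_stepE:
  assumes "x \<noteq> [] \<or> y \<noteq> []"
  obtains (subst) x' a y' b where "x = x' @ [a]" "y = y' @ [b]" "F x y = F x' y' + d a b powr p"
    | (ins) y' w where "w \<noteq> []" "y = y' @ w" "F x y = F x y' + ins_cost w"
    | (del) x' w where "w \<noteq> []" "x = x' @ w" "F x y = F x' y + del_cost w"
proof -
  consider "x = []" | "y = []" | "x \<noteq> []" "y \<noteq> []" by blast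
  then show ?thesis
  proof cases
    case 1
    with assms ins[of y "[]"] show ?thesis by (simp add: F_Nil_left gap_cost_def)
  next
    case 2
    with assms del[of x "[]"] show ?thesis by (simp add: F_Nil_right gap_cost_def)
  next
    case 3
    let ?V = "last_step_values F (\<lambda>a b. d a b powr p) (\<lambda>w. al w powr p) (\<lambda>w. be w powr p) x y"
    have "F x y \<in> ?V"
      using 3 p_pos by (simp add: lp_edit_pow_rec finite_last_step_values last_step_values_nonempty)
    then show ?thesis
      by (cases rule: last_step_valuesE) (use subst ins del in \<open>simp_all add: gap_cost_def\<close>)
  qed
qed

text \<open>
  The aligned tails \<open>r\<close> and \<open>t\<close> carry the induction: \<open>ins_cost\<close> is not additive, but it is
  rotation invariant and changes letterwise by at most \<open>d\<^sup>p\<close>.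
\<close>
lemma ins_cost_le_F:
  assumes "length r = length t"
  shows "ins_cost (w @ t) \<le> ins_cost (u @ r) + F u w + (\<Sum>(a, b)\<leftarrow>zip r t. d a b powr p)"
  using assms
proof (induction "length u + length w" arbitrary: u w r t rule: less_induct)
  case less
  show ?case
  proof (cases "u = [] \<and> w = []")
    case True
    then show ?thesis
      using gap_cost_lipschitz[OF gap_CL_al less.prems al_lipschitz] by (simp add: F_Nil_left gap_cost_def)
  next
    case False
    then have "u \<noteq> [] \<or> w \<noteq> []" by simp
    then show ?thesis
    proof (cases rule: F_last_stepE)
      case (subst u' a w' b)
      have "ins_cost (w' @ b # t) \<le> ins_cost (u' @ a # r) + F u' w' + (\<Sum>(a, b)\<leftarrow>zip (a # r) (b # t). d a b powr p)"
        using subst less.prems by (intro less.hyps) auto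
      then show ?thesis using subst by simp
    next
      case (ins w' v)
      have "ins_cost (w' @ t) \<le> ins_cost (u @ r) + F u w' + (\<Sum>(a, b)\<leftarrow>zip r t. d a b powr p)"
        using ins less.prems by (intro less.hyps) auto
      moreover have "ins_cost (w @ t) \<le> ins_cost v + ins_cost (w' @ t)"
      proof -
        have "ins_cost (w @ t) = ins_cost (v @ t @ w')"
          using ins gap_cost_rotate[OF gap_CL_al, of w' "v @ t"] by simp
        also have "\<dots> \<le> ins_cost v + ins_cost (t @ w')"
          by (rule gap_cost_append_le[OF gap_CL_al])
        also have "ins_cost (t @ w') = ins_cost (w' @ t)"
          by (rule gap_cost_rotate[OF gap_CL_al])
        finally show ?thesis .
      qed
      ultimately show ?thesis using ins by simp
    next
      case (del u' v)
      have "ins_cost (w @ t) \<le> ins_cost (u' @ r) + F u' w + (\<Sum>(a, b)\<leftarrow>zip r t. d a b powr p)"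
        using del less.prems by (intro less.hyps) auto
      moreover have "ins_cost (u' @ r) \<le> ins_cost (u @ r)"
        using del gap_cost_mono[OF gap_CL_al, of u' r v] by simp
      ultimately show ?thesis using del gap_cost_nonneg[OF gap_CL_be, of v] by simp
    qed
  qed
qed

lemma ins_root_le_D: "ins_cost w powr (1 / p) \<le> ins_cost u powr (1 / p) + D u w"
proof -
  have "ins_cost w \<le> ins_cost u + F u w"
    using ins_cost_le_F[of "[]" "[]" w u] by simp
  then have "ins_cost w powr (1 / p) \<le> (ins_cost u + F u w) powr (1 / p)"
    using p_pos by (intro powr_mono2) (simp_all add: gap_cost_nonneg[OF gap_CL_al])
  also have "\<dots> \<le> ins_cost u powr (1 / p) + F u w powr (1 / p)"
    by (rule add_powr_root_le[OF p_ge_1]) (simp_all add: gap_cost_nonneg[OF gap_CL_al] lp_edit_pow_def)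
  finally show ?thesis by (simp add: D_eq_root)
qed

text \<open>
  An optimal alignment of \<open>y\<^sub>1 @ y\<^sub>2\<close> with \<open>z\<close> can be cut after \<open>y\<^sub>1\<close>: a prefix of \<open>z\<close> is aligned
  with \<open>y\<^sub>1\<close> and the rest with a suffix \<open>u\<close> of \<open>y\<^sub>2\<close>, at no extra cost. A gap block straddling the
  cut is charged to \<open>y\<^sub>1\<close> alone, which is affordable because \<open>del_cost\<close> is monotone.
\<close>
lemma F_split_left:
  obtains j v u where "j \<le> length z" "y2 = v @ u" "F y1 (take j z) + F u (drop j z) \<le> F (y1 @ y2) z"
proof -
  have "\<exists>j v u. j \<le> length z \<and> y2 = v @ u \<and> F y1 (take j z) + F u (drop j z) \<le> F (y1 @ y2) z"
  proof (induction "length y2 + length z" arbitrary: y2 z rule: less_induct)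
    case less
    show ?case
    proof (cases y2 rule: rev_cases)
      case Nil
      then show ?thesis by (intro exI[of _ "length z"] exI[of _ "[]"]) (simp add: F_Nil_left gap_cost_def)
    next
      case (snoc y2' a)
      then have "y1 @ y2 \<noteq> [] \<or> z \<noteq> []" by simp
      then show ?thesis
      proof (cases rule: F_last_stepE)
        case (subst X' a' z' c)
        then have "X' = y1 @ y2'" "a' = a" using snoc by auto
        obtain j v u where "j \<le> length z'" "y2' = v @ u" "F y1 (take j z') + F u (drop j z') \<le> F (y1 @ y2') z'"
          using less[of y2' z'] snoc subst by auto
        moreover have "F (u @ [a]) (drop j z' @ [c]) \<le> F u (drop j z') + d a c powr p"
          by (rule F_snoc_le)
        ultimately show ?thesis
          using subst snoc \<open>X' = y1 @ y2'\<close> \<open>a' = a\<close>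
          by (intro exI[of _ j] exI[of _ v] exI[of _ "u @ [a]"]) auto
      next
        case (ins z' w)
        obtain j v u where "j \<le> length z'" "y2 = v @ u" "F y1 (take j z') + F u (drop j z') \<le> F (y1 @ y2) z'"
          using less[of y2 z'] ins by auto
        moreover have "F u (drop j z' @ w) \<le> F u (drop j z') + ins_cost w"
          by (rule F_ins_le)
        ultimately show ?thesis
          using ins by (intro exI[of _ j] exI[of _ v] exI[of _ u]) auto
      next
        case (del X' w)
        then obtain us where "y1 = X' @ us \<and> us @ y2 = w \<or> y1 @ us = X' \<and> y2 = us @ w"
          by (auto simp: append_eq_append_conv2)
        then show ?thesis
        proof (elim disjE conjE)
          assume "y1 = X' @ us" "us @ y2 = w"
          then have "F y1 z \<le> F X' z + del_cost us"
            by (simp add: F_del_le)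
          also have "del_cost us \<le> del_cost w"
            using gap_cost_mono[OF gap_CL_be, of us "[]" y2] \<open>us @ y2 = w\<close> by simp
          finally show ?thesis
            using del by (intro exI[of _ "length z"] exI[of _ y2] exI[of _ "[]"]) (simp add: F_Nil_left gap_cost_def)
        next
          assume "y1 @ us = X'" "y2 = us @ w"
          obtain j v u where "j \<le> length z" "us = v @ u" "F y1 (take j z) + F u (drop j z) \<le> F (y1 @ us) z"
            using less[of us z] \<open>y2 = us @ w\<close> del by auto
          moreover have "F (u @ w) (drop j z) \<le> F u (drop j z) + del_cost w"
            by (rule F_del_le)
          ultimately show ?thesis
            using del \<open>y1 @ us = X'\<close> \<open>y2 = us @ w\<close>
            by (intro exI[of _ j] exI[of _ v] exI[of _ "u @ w"]) auto
        qed
      qed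
    qed
  qed
  then show ?thesis using that by blast
qed

lemma D_triangleI:
  assumes "F x z \<le> (A + B) powr p + (a + b) powr p"
    and "0 \<le> A" "0 \<le> B" "0 \<le> a" "0 \<le> b"
    and "A powr p + a powr p \<le> F x y" "B powr p + b powr p \<le> F y z"
  shows "D x z \<le> D x y + D y z"
proof -
  have "D x z \<le> ((A + B) powr p + (a + b) powr p) powr (1 / p)"
    unfolding D_eq_root using assms(1) p_pos by (intro powr_mono2) (simp_all add: lp_edit_pow_def)
  also have "\<dots> \<le> (A powr p + a powr p) powr (1 / p) + (B powr p + b powr p) powr (1 / p)"
    using assms(2-5) by (rule minkowski_pair[OF p_ge_1])
  also have "\<dots> \<le> D x y + D y z"
    unfolding D_eq_root using assms(6,7) p_pos by (intro add_mono powr_mono2) simp_all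
  finally show ?thesis .
qed

lemma D_triangle_del_first:
  assumes "x = x' @ w" "F x y = F x' y + del_cost w" and IH: "D x' z \<le> D x' y + D y z"
  shows "D x z \<le> D x y + D y z"
proof (rule D_triangleI[where A = "D x' y" and B = "D y z" and a = "del_cost w powr (1 / p)" and b = 0])
  have "F x z \<le> F x' z + del_cost w"
    using F_del_le assms(1) by simp
  also have "\<dots> \<le> (D x' y + D y z) powr p + (del_cost w powr (1 / p) + 0) powr p"
    using F_le_powr[OF IH] by (simp add: root_powr gap_cost_nonneg[OF gap_CL_be])
  finally show "F x z \<le> \<dots>" .
  show "D x' y powr p + (del_cost w powr (1 / p)) powr p \<le> F x y"
    using assms(2) by (simp add: lp_edit_pow_def root_powr gap_cost_nonneg[OF gap_CL_be])
qed (simp_all add: D_nonneg lp_edit_pow_def)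

lemma D_triangle_ins_first:
  assumes y: "y = y' @ u" and Fxy: "F x y = F x y' + ins_cost u"
    and IH: "\<And>z'. length z' \<le> length z \<Longrightarrow> D x z' \<le> D x y' + D y' z'"
  shows "D x z \<le> D x y + D y z"
proof -
  obtain j v u' where j: "j \<le> length z" "u = v @ u'"
    and split: "F y' (take j z) + F u' (drop j z) \<le> F y z"
    using F_split_left[of z u y'] y by blast
  have "ins_cost u' \<le> ins_cost u"
    using gap_cost_mono[OF gap_CL_al, of "[]" u' v] j(2) by simp
  then have "ins_cost u' powr (1 / p) \<le> ins_cost u powr (1 / p)"
    using p_pos by (intro powr_mono2) (simp_all add: gap_cost_nonneg[OF gap_CL_al])
  then have ins_root: "ins_cost (drop j z) powr (1 / p) \<le> ins_cost u powr (1 / p) + D u' (drop j z)"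
    using ins_root_le_D[of "drop j z" u'] by simp
  show ?thesis
  proof (rule D_triangleI[where A = "D x y'" and B = "D y' (take j z)"
        and a = "ins_cost u powr (1 / p)" and b = "D u' (drop j z)"])
    have "F x z \<le> F x (take j z) + ins_cost (drop j z)"
      using F_ins_le[of x "take j z" "drop j z"] by simp
    also have "\<dots> \<le> (D x y' + D y' (take j z)) powr p + (ins_cost u powr (1 / p) + D u' (drop j z)) powr p"
      using F_le_powr[OF IH[of "take j z"]] root_le_imp_le_powr[OF gap_cost_nonneg[OF gap_CL_al] ins_root]
      by (intro add_mono) simp_all
    finally show "F x z \<le> \<dots>" .
    show "D x y' powr p + (ins_cost u powr (1 / p)) powr p \<le> F x y"
      using Fxy by (simp add: lp_edit_pow_def root_powr gap_cost_nonneg[OF gap_CL_al])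
    show "D y' (take j z) powr p + D u' (drop j z) powr p \<le> F y z"
      using split by (simp add: lp_edit_pow_def)
  qed (simp_all add: D_nonneg)
qed

lemma D_triangle_subst_subst:
  assumes "x = x' @ [a]" "y = y' @ [b]" "z = z' @ [c]"
    and "F x y = F x' y' + d a b powr p" "F y z = F y' z' + d b c powr p"
    and IH: "D x' z' \<le> D x' y' + D y' z'"
  shows "D x z \<le> D x y + D y z"
proof (rule D_triangleI[where A = "D x' y'" and B = "D y' z'" and a = "d a b" and b = "d b c"])
  have "F x z \<le> F x' z' + d a c powr p"
    using F_snoc_le assms(1,3) by simp
  also have "\<dots> \<le> (D x' y' + D y' z') powr p + (d a b + d b c) powr p"
    using F_le_powr[OF IH] d_triangle[of a c b] p_pos
    by (intro add_mono powr_mono2) (simp_all add: d_nonneg)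
  finally show "F x z \<le> \<dots>" .
  show "D x' y' powr p + d a b powr p \<le> F x y"
    using assms(4) by (simp add: lp_edit_pow_def)
  show "D y' z' powr p + d b c powr p \<le> F y z"
    using assms(5) by (simp add: lp_edit_pow_def)
qed (simp_all add: D_nonneg d_nonneg)

text \<open>The cases where the alignment of \<open>(y, z)\<close> ends with a gap are the transposes of those for \<open>(x, y)\<close>.\<close>
lemma D_triangle_ins_last:
  assumes "z = z' @ v" "F y z = F y z' + ins_cost v" and "D x z' \<le> D x y + D y z'"
  shows "D x z \<le> D x y + D y z"
  using cl_edit_costs.D_triangle_del_first[OF cl_edit_costs_transpose, of z z' v y x] assms
  by (simp add: lp_edit_transpose[of p "\<lambda>a b. d b a" be al] lp_edit_pow_transpose[of p "\<lambda>a b. d b a" be al]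
      add.commute)

lemma D_triangle_del_last:
  assumes "y = y' @ w" "F y z = F y' z + del_cost w"
    and "\<And>x'. length x' \<le> length x \<Longrightarrow> D x' z \<le> D x' y' + D y' z"
  shows "D x z \<le> D x y + D y z"
  using cl_edit_costs.D_triangle_ins_first[OF cl_edit_costs_transpose, of y y' w z x] assms
  by (simp add: lp_edit_transpose[of p "\<lambda>a b. d b a" be al] lp_edit_pow_transpose[of p "\<lambda>a b. d b a" be al]
      add.commute)

lemma D_triangle: "D x z \<le> D x y + D y z"
proof (induction "length x + length y + length z" arbitrary: x y z rule: less_induct)
  case less
  show ?case
  proof (cases "x = [] \<and> y = []")
    case True
    then show ?thesis by simp
  next
    case False
    then have "x \<noteq> [] \<or> y \<noteq> []" by simp
    then show ?thesis
    proof (cases rule: F_last_stepE)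
      case (del x' w)
      show ?thesis
        by (rule D_triangle_del_first[OF del(2,3)], rule less) (use del in auto)
    next
      case (ins y' u)
      show ?thesis
        by (rule D_triangle_ins_first[OF ins(2,3)], rule less) (use ins in \<open>auto simp flip: length_greater_0_conv\<close>)
    next
      case (subst x' a y' b)
      note xy = this
      then have "y \<noteq> [] \<or> z \<noteq> []" by simp
      then show ?thesis
      proof (cases rule: F_last_stepE[of y z])
        case (subst y'' b' z' c)
        with xy have "y'' = y'" "b' = b" by auto
        have IH: "D x' z' \<le> D x' y' + D y' z'"
          using xy subst by (intro less) auto
        show ?thesis
          by (rule D_triangle_subst_subst[OF xy(1,2) subst(2) xy(3) _ IH])
            (use subst \<open>y'' = y'\<close> \<open>b' = b\<close> in simp)
      next
        case (ins z' v)
        show ?thesis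
          by (rule D_triangle_ins_last[OF ins(2,3)], rule less) (use ins in auto)
      next
        case (del y'' w)
        show ?thesis
          by (rule D_triangle_del_last[OF del(2,3)], rule less) (use del in \<open>auto simp flip: length_greater_0_conv\<close>)
      qed
    qed
  qed
qed

lemma F_eq_0_imp_list_all2: "F x y = 0 \<Longrightarrow> list_all2 (\<lambda>a b. d a b = 0) x y"
proof (induction "length x + length y" arbitrary: x y rule: less_induct)
  case less
  show ?case
  proof (cases "x = [] \<and> y = []")
    case False
    then have "x \<noteq> [] \<or> y \<noteq> []" by simp
    then show ?thesis
    proof (cases rule: F_last_stepE)
      case (subst x' a y' b)
      then have "F x' y' = 0" "d a b = 0"
        using less.prems d_nonneg[of a b] by (simp_all add: lp_edit_pow_def add_nonneg_eq_0_iff)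
      then show ?thesis using subst less.hyps[of x' y'] by (simp add: list_all2_appendI)
    next
      case (ins y' w)
      then show ?thesis
        using less.prems gap_CL_pos[OF gap_CL_al, of w] by (simp add: lp_edit_pow_def gap_cost_def add_nonneg_eq_0_iff)
    next
      case (del x' w)
      then show ?thesis
        using less.prems gap_CL_pos[OF gap_CL_be, of w] by (simp add: lp_edit_pow_def gap_cost_def add_nonneg_eq_0_iff)
    qed
  qed simp
qed

lemma F_self_eq_0: "F x x = 0"
proof (induction x rule: rev_induct)
  case (snoc a x)
  have "d a a = 0"
    using quasi_metric_d unfolding quasi_metric_def by blast
  then show ?case
    using F_snoc_le[of x a x a] snoc by (simp add: lp_edit_pow_def antisym)
qed (simp add: F_Nil_left gap_cost_def)

theorem quasi_metric_D: "quasi_metric D"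
  unfolding quasi_metric_def
proof (intro conjI allI)
  fix x y z
  show "0 \<le> D x y" by (rule D_nonneg)
  show "D x z \<le> D x y + D y z" by (rule D_triangle)
  show "(D x y = 0 \<and> D y x = 0) \<longleftrightarrow> x = y"
  proof
    assume "D x y = 0 \<and> D y x = 0"
    then have "list_all2 (\<lambda>a b. d a b = 0) x y" "list_all2 (\<lambda>a b. d a b = 0) y x"
      by (simp_all add: D_eq_root F_eq_0_imp_list_all2)
    then have "length x = length y" "\<forall>i < length x. d (x ! i) (y ! i) = 0 \<and> d (y ! i) (x ! i) = 0"
      by (auto simp: list_all2_conv_all_nth)
    then show "x = y"
      using quasi_metric_d by (auto simp: quasi_metric_def intro: nth_equalityI)
  qed (simp add: D_eq_root F_self_eq_0)
qed

end

lemma cl_edit_costs_glob_sim_gaps: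
  fixes s :: "'a \<Rightarrow> 'a \<Rightarrow> real" and \<gamma> \<delta> :: "'a list \<Rightarrow> real"
  assumes p: "1 \<le> p" and sane: "sane_scoring s" and "quasi_metric (score_dist p s)"
    and \<gamma>: "gap_CL \<gamma>" and \<delta>: "gap_CL \<delta>"
    and \<gamma>_lipschitz: "\<And>a b. \<gamma> [b] - \<gamma> [a] \<le> score_dist p s a b powr p"
    and \<delta>_lipschitz: "\<And>a b. s a a + \<delta> [a] - s b b - \<delta> [b] \<le> score_dist p s a b powr p"
  shows "cl_edit_costs p (score_dist p s) (\<lambda>x. \<gamma> x powr (1 / p))
    (\<lambda>x. (glob_sim s \<gamma> \<delta> x x + \<delta> x) powr (1 / p))"
proof
  note \<gamma>_nonneg = gap_CL_nonneg[OF \<gamma>] and \<delta>_nonneg = gap_CL_nonneg[OF \<delta>]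
  have \<alpha>_pow: "(\<gamma> w powr (1 / p)) powr p = \<gamma> w" if "w \<noteq> []" for w
    using p \<gamma>_nonneg[OF that] by (simp add: powr_powr)
  have \<beta>_pow: "((glob_sim s \<gamma> \<delta> w w + \<delta> w) powr (1 / p)) powr p = (\<Sum>a\<leftarrow>w. s a a) + \<delta> w"
    if "w \<noteq> []" for w
    using p \<delta>_nonneg[OF that] sane_scoring_self_score_nonneg[OF sane, of w]
    by (simp add: powr_powr glob_sim_diag[OF sane \<gamma>_nonneg \<delta>_nonneg])
  show "gap_CL (\<lambda>w. (\<gamma> w powr (1 / p)) powr p)"
    using \<gamma> by (subst gap_CL_cong[OF \<alpha>_pow]) simp_all
  show "gap_CL (\<lambda>w. ((glob_sim s \<gamma> \<delta> w w + \<delta> w) powr (1 / p)) powr p)"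
    using gap_CL_add_letter_weights[OF \<delta> sane_scoring_diag_nonneg[OF sane]]
    by (subst gap_CL_cong[OF \<beta>_pow]) simp_all
  show "(\<gamma> [b] powr (1 / p)) powr p - (\<gamma> [a] powr (1 / p)) powr p \<le> score_dist p s a b powr p" for a b
    using \<gamma>_lipschitz by (simp add: \<alpha>_pow)
  show "((glob_sim s \<gamma> \<delta> [a] [a] + \<delta> [a]) powr (1 / p)) powr p
      - ((glob_sim s \<gamma> \<delta> [b] [b] + \<delta> [b]) powr (1 / p)) powr p \<le> score_dist p s a b powr p" for a b
    using \<delta>_lipschitz[of a b] by (simp add: \<beta>_pow)
qed (use assms in simp_all)

theorem corollary4p7:
  fixes s :: "'a \<Rightarrow> 'a \<Rightarrow> real" and p :: real
    and \<gamma> \<delta> :: "'a list \<Rightarrow> real"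
  assumes "1 \<le> p"
    and "sane_scoring s"
    and "quasi_metric (score_dist p s)"
    and "gap_CL \<gamma>" and "gap_CL \<delta>"
    and "\<forall>a b. \<gamma> [b] - \<gamma> [a] \<le> score_dist p s a b powr p"
    and "\<forall>a b. s a a + \<delta> [a] - s b b - \<delta> [b] \<le> score_dist p s a b powr p"
  shows "quasi_metric (lp_edit p (score_dist p s) (\<lambda>x. \<gamma> x powr (1 / p))
            (\<lambda>x. (glob_sim s \<gamma> \<delta> x x + \<delta> x) powr (1 / p)))
    \<and> (\<forall>x y. lp_edit p (score_dist p s) (\<lambda>x. \<gamma> x powr (1 / p))
            (\<lambda>x. (glob_sim s \<gamma> \<delta> x x + \<delta> x) powr (1 / p)) x y
          = (glob_sim s \<gamma> \<delta> x x - glob_sim s \<gamma> \<delta> x y) powr (1 / p))"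
proof -
  interpret cl_edit_costs p "score_dist p s" "\<lambda>x. \<gamma> x powr (1 / p)"
    "\<lambda>x. (glob_sim s \<gamma> \<delta> x x + \<delta> x) powr (1 / p)"
    using assms by (intro cl_edit_costs_glob_sim_gaps) auto
  have "0 < p" using assms(1) by simp
  then show ?thesis
    using quasi_metric_D lp_edit_eq_glob_sim[OF _ assms(2) gap_CL_nonneg[OF assms(4)] gap_CL_nonneg[OF assms(5)]]
    by simp
qed

end
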